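(* In the multi-parameter setting described in the context, for every Kraus representation $\{E_k(\theta)\}$ of the channel, $H(\theta)\le C_E(\theta)$ as $m\times m$ real symmetric matrices, where $C_E(\theta)_{jk}=4\sum_l\mathrm{Re}\,\mathrm{tr}\{E_l^{(j)}(\theta)\rho_0E_l^{(k)}(\theta)^\dagger\}$.
   Context: A multi-parameter quantum channel on density matrices on $\mathbb{C}^d$ is $\rho_0\mapsto\sum_kE_k(\theta)\rho_0E_k(\theta)^\dagger$ with $\theta=(\theta^1,\dots,\theta^m)\in\mathbb{R}^m$, Kraus operators differentiable in $\theta$, $\sum_kE_k^\dagger E_k=I$; a channel may have many Kraus representations. The input is a fixed pure state $\rho_0=|\psi_0\rangle\langle\psi_0|$ with output $\rho_{out}(\theta)$. Write $X^{(j)}=\partial X/\partial\theta^j$. The SLD quantum information matrix is $H(\theta)_{jk}=\mathrm{Re}\,\mathrm{tr}\{\lambda^{(j)}\rho_{out}\lambda^{(k)}\}$, with $\lambda^{(j)}$ a self-adjoint solution of $\partial\rho_{out}/\partial\theta^j=\frac12(\rho_{out}\lambda^{(j)}+\lambda^{(j)}\rho_{out})$. *)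

theory Defs
  imports "HOL-Analysis.Analysis"
begin

definition cadj :: "complex^'d^'d \<Rightarrow> complex^'d^'d" where
  "cadj A = (\<chi> i j. cnj (A $ j $ i))"

definition ketbra :: "complex^'d \<Rightarrow> complex^'d^'d" where
  "ketbra psi = (\<chi> i j. psi $ i * cnj (psi $ j))"

definition pd :: "(real^'m \<Rightarrow> 'a::real_normed_vector) \<Rightarrow> real^'m \<Rightarrow> 'm \<Rightarrow> 'a" where
  "pd f \<theta> j = vector_derivative (\<lambda>t. f (\<theta> + t *\<^sub>R axis j 1)) (at 0)"

definition chan_out :: "('k::finite \<Rightarrow> real^'m \<Rightarrow> complex^'d^'d) \<Rightarrow> complex^'d^'d \<Rightarrow> real^'m \<Rightarrow> complex^'d^'d" where
  "chan_out E \<rho>0 \<theta> = (\<Sum>k\<in>UNIV. E k \<theta> ** \<rho>0 ** cadj (E k \<theta>))"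

definition is_SLD :: "(real^'m \<Rightarrow> complex^'d^'d) \<Rightarrow> real^'m \<Rightarrow> 'm \<Rightarrow> complex^'d^'d \<Rightarrow> bool" where
  "is_SLD \<rho> \<theta> j lam \<longleftrightarrow> cadj lam = lam \<and>
     pd \<rho> \<theta> j = (1/2 :: real) *\<^sub>R (\<rho> \<theta> ** lam + lam ** \<rho> \<theta>)"

definition SLD_info :: "complex^'d^'d \<Rightarrow> ('m \<Rightarrow> complex^'d^'d) \<Rightarrow> real^'m^'m" where
  "SLD_info \<rho> lam = (\<chi> j k. Re (trace (lam j ** \<rho> ** lam k)))"

definition C_E :: "('k::finite \<Rightarrow> real^'m \<Rightarrow> complex^'d^'d) \<Rightarrow> complex^'d^'d \<Rightarrow> real^'m \<Rightarrow> real^'m^'m" where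
  "C_E E \<rho>0 \<theta> = (\<chi> j k. 4 * (\<Sum>l\<in>UNIV. Re (trace (pd (E l) \<theta> j ** \<rho>0 ** cadj (pd (E l) \<theta> k)))))"

definition loewner_le :: "real^'m^'m \<Rightarrow> real^'m^'m \<Rightarrow> bool" where
  "loewner_le A B \<longleftrightarrow> (\<forall>v. v \<bullet> (A *v v) \<le> v \<bullet> (B *v v))"

end

theory Submission
  imports Defs
begin

text \<open>Fix a direction v and put Lambda = (\<Sum>j. v$j lam j), w l = Lambda (E l \<psi>0) and
  a l = (\<Sum>j. v$j pd (E l) \<theta> j) \<psi>0. Then v \<bullet> (H v) = (\<Sum>l. w l \<bullet> w l) and
  v \<bullet> (C_E v) = 4 (\<Sum>l. a l \<bullet> a l), where \<bullet> is the real inner product Re \<langle>x, y\<rangle> that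
  HOL-Analysis puts on complex^'d. Differentiating rho = (\<Sum>l. E l rho0 (E l)\<dagger> ) along v and
  pairing with Lambda computes Re tr (D_v rho Lambda) twice: by the SLD equation it is
  (\<Sum>l. w l \<bullet> w l), by the product rule it is 2 (\<Sum>l. a l \<bullet> w l). Expanding
  0 \<le> (\<Sum>l. \<parallel>2 a l - w l\<parallel>^2) then gives (\<Sum>l. w l \<bullet> w l) \<le> 4 (\<Sum>l. a l \<bullet> a l).\<close>

lemma inner_complex_eq_Re_mult_cnj: "x \<bullet> y = Re (x * cnj y)"
  by (simp add: inner_complex_def)

lemma cadj_mult: "cadj (A ** B) = cadj B ** cadj A"
  by (simp add: cadj_def matrix_matrix_mult_def vec_eq_iff mult.commute)

lemma cadj_add: "cadj (A + B) = cadj A + cadj B"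
  by (simp add: cadj_def vec_eq_iff)

lemma cadj_scaleR: "cadj (r *\<^sub>R A) = r *\<^sub>R cadj A"
  by (simp add: cadj_def vec_eq_iff)

lemma Re_trace_ketbra: "Re (trace (X ** ketbra \<psi> ** cadj Y)) = (X *v \<psi>) \<bullet> (Y *v \<psi>)"
proof -
  have "(X ** ketbra \<psi>) $ i $ c = (X *v \<psi>)$i * cnj (\<psi>$c)" for i c
    by (simp add: matrix_matrix_mult_def ketbra_def matrix_vector_mult_def sum_distrib_left
        sum_distrib_right mult_ac)
  then have "(X ** ketbra \<psi> ** cadj Y) $ i $ i = (X *v \<psi>)$i * cnj ((Y *v \<psi>)$i)" for i
    by (simp add: matrix_matrix_mult_def[of "X ** ketbra \<psi>"] cadj_def matrix_vector_mult_def
        sum_distrib_left mult_ac)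
  then show ?thesis
    by (simp add: trace_def inner_vec_def inner_complex_eq_Re_mult_cnj)
qed

lemma matrix_add_rdistrib: "(B + C) ** A = B ** A + C ** A"
  by (vector matrix_matrix_mult_def sum.distrib[symmetric] field_simps)

lemma matrix_mult_sum_left: "(\<Sum>i\<in>S. f i) ** B = (\<Sum>i\<in>S. f i ** B)"
  by (induct S rule: infinite_finite_induct) (auto simp: matrix_add_rdistrib)

lemma matrix_mult_sum_right: "B ** (\<Sum>i\<in>S. f i) = (\<Sum>i\<in>S. B ** f i)"
  by (induct S rule: infinite_finite_induct) (auto simp: matrix_add_ldistrib)

lemma trace_sum: "trace (\<Sum>i\<in>S. f i) = (\<Sum>i\<in>S. trace (f i :: 'a::comm_semiring_1^'n^'n))"
  by (induct S rule: infinite_finite_induct) (simp_all add: trace_add trace_0[unfolded mat_0])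

lemma trace_scaleR: "trace (r *\<^sub>R A) = r *\<^sub>R trace (A :: 'a::real_algebra_1^'n^'n)"
  by (simp add: trace_def scaleR_sum_right)

lemma trace_mult_cycle:
  "trace (A ** B ** C) = trace (C ** A ** (B :: 'a::comm_semiring_1^'n^'m))"
  by (simp only: trace_mul_sym[of "A ** B" C] matrix_mul_assoc)

lemma Re_trace_chan_out:
  "Re (trace (X ** chan_out E (ketbra \<psi>) \<theta> ** cadj Y))
     = (\<Sum>l\<in>UNIV. (X *v (E l \<theta> *v \<psi>)) \<bullet> (Y *v (E l \<theta> *v \<psi>)))"
proof -
  have "X ** chan_out E (ketbra \<psi>) \<theta> ** cadj Y
      = (\<Sum>l\<in>UNIV. (X ** E l \<theta>) ** ketbra \<psi> ** cadj (Y ** E l \<theta>))"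
    by (simp add: chan_out_def matrix_mult_sum_left matrix_mult_sum_right cadj_mult
        matrix_mul_assoc)
  then show ?thesis
    by (simp add: trace_sum Re_trace_ketbra matrix_vector_mul_assoc)
qed

lemma quadratic_form_sum_inner:
  fixes f g :: "'l \<Rightarrow> 'm::finite \<Rightarrow> 'a::real_inner" and v :: "real^'m"
  shows "v \<bullet> ((\<chi> j k. \<Sum>l\<in>L. f l j \<bullet> g l k) *v v)
       = (\<Sum>l\<in>L. (\<Sum>j\<in>UNIV. v$j *\<^sub>R f l j) \<bullet> (\<Sum>k\<in>UNIV. v$k *\<^sub>R g l k))"
proof -
  have "v \<bullet> ((\<chi> j k. \<Sum>l\<in>L. f l j \<bullet> g l k) *v v)
      = (\<Sum>j\<in>UNIV. \<Sum>k\<in>UNIV. \<Sum>l\<in>L. v$j * v$k * (f l j \<bullet> g l k))"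
    by (simp add: inner_vec_def matrix_vector_mult_def sum_distrib_left mult_ac)
  also have "\<dots> = (\<Sum>k\<in>UNIV. \<Sum>j\<in>UNIV. \<Sum>l\<in>L. v$j * v$k * (f l j \<bullet> g l k))"
    by (rule sum.swap)
  also have "\<dots> = (\<Sum>k\<in>UNIV. \<Sum>l\<in>L. \<Sum>j\<in>UNIV. v$j * v$k * (f l j \<bullet> g l k))"
    by (intro sum.cong refl sum.swap)
  also have "\<dots> = (\<Sum>l\<in>L. \<Sum>k\<in>UNIV. \<Sum>j\<in>UNIV. v$j * v$k * (f l j \<bullet> g l k))"
    by (rule sum.swap)
  also have "\<dots> = (\<Sum>l\<in>L. (\<Sum>j\<in>UNIV. v$j *\<^sub>R f l j) \<bullet> (\<Sum>k\<in>UNIV. v$k *\<^sub>R g l k))"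
    by (simp add: inner_sum_left inner_sum_right sum_distrib_left mult_ac)
  finally show ?thesis .
qed

lemma sum_inner_self_le_of_eq_twice:
  fixes w a :: "'l \<Rightarrow> 'a::real_inner"
  assumes "(\<Sum>l\<in>L. w l \<bullet> w l) = 2 * (\<Sum>l\<in>L. a l \<bullet> w l)"
  shows "(\<Sum>l\<in>L. w l \<bullet> w l) \<le> 4 * (\<Sum>l\<in>L. a l \<bullet> a l)"
proof -
  have square: "(2 *\<^sub>R a l - w l) \<bullet> (2 *\<^sub>R a l - w l)
      = 4 * (a l \<bullet> a l) - 4 * (a l \<bullet> w l) + w l \<bullet> w l" for l
    by (simp add: inner_diff_left inner_diff_right inner_commute[of "w l" "a l"])
  have "0 \<le> (\<Sum>l\<in>L. (2 *\<^sub>R a l - w l) \<bullet> (2 *\<^sub>R a l - w l))"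
    by (simp add: sum_nonneg)
  also have "\<dots> = 4 * (\<Sum>l\<in>L. a l \<bullet> a l) - 4 * (\<Sum>l\<in>L. a l \<bullet> w l) + (\<Sum>l\<in>L. w l \<bullet> w l)"
    by (simp only: square sum.distrib sum_subtractf sum_distrib_left)
  finally show ?thesis using assms by linarith
qed

lemma matrix_mult_scaleR_right: "A ** (k *\<^sub>R B) = k *\<^sub>R (A ** B :: 'a::real_algebra_1^'n^'m)"
  by (simp add: matrix_scalar_ac scalar_matrix_assoc)

lemma bounded_bilinear_matrix_mult:
  "bounded_bilinear ((**) :: complex^'n^'n \<Rightarrow> complex^'n^'n \<Rightarrow> complex^'n^'n)"
  unfolding bilinear_conv_bounded_bilinear[symmetric] bilinear_def
  by (simp add: linearI matrix_add_rdistrib matrix_add_ldistrib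
      scalar_matrix_assoc[symmetric] matrix_mult_scaleR_right)

lemma bounded_linear_cadj: "bounded_linear cadj"
  unfolding linear_conv_bounded_linear[symmetric]
  by (simp add: linearI cadj_add cadj_scaleR)

lemma has_vector_derivative_pd:
  assumes "f differentiable (at \<theta>)"
  shows "((\<lambda>t. f (\<theta> + t *\<^sub>R axis j 1)) has_vector_derivative pd f \<theta> j) (at 0)"
proof -
  have "((\<lambda>t::real. \<theta> + t *\<^sub>R axis j 1) has_vector_derivative axis j 1) (at 0)"
    by (auto intro!: derivative_eq_intros)
  then have "(f \<circ> (\<lambda>t::real. \<theta> + t *\<^sub>R axis j 1)) differentiable (at 0)"
    by (rule differentiable_chain_at[OF differentiableI_vector]) (simp add: assms)
  then show ?thesis
    unfolding pd_def vector_derivative_works[symmetric] by (simp add: o_def)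
qed

lemma pd_chan_out:
  assumes "\<And>k. E k differentiable (at \<theta>)"
  shows "pd (chan_out E K) \<theta> j
    = (\<Sum>k\<in>UNIV. E k \<theta> ** K ** cadj (pd (E k) \<theta> j) + pd (E k) \<theta> j ** K ** cadj (E k \<theta>))"
proof -
  note E' = has_vector_derivative_pd[OF assms, of _ j]
  note mult = bounded_bilinear.has_vector_derivative[OF bounded_bilinear_matrix_mult]
  have "((\<lambda>t. E k (\<theta> + t *\<^sub>R axis j 1) ** K ** cadj (E k (\<theta> + t *\<^sub>R axis j 1)))
      has_vector_derivative
        E k \<theta> ** K ** cadj (pd (E k) \<theta> j) + pd (E k) \<theta> j ** K ** cadj (E k \<theta>)) (at 0)"
    for k
    using mult[OF mult[OF E' has_vector_derivative_const]
        bounded_linear.has_vector_derivative[OF bounded_linear_cadj E']]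
    by simp
  then have "((\<lambda>t. chan_out E K (\<theta> + t *\<^sub>R axis j 1)) has_vector_derivative
      (\<Sum>k\<in>UNIV. E k \<theta> ** K ** cadj (pd (E k) \<theta> j) + pd (E k) \<theta> j ** K ** cadj (E k \<theta>)))
      (at 0)"
    unfolding chan_out_def by (rule has_vector_derivative_sum)
  then show ?thesis
    unfolding pd_def by (rule vector_derivative_at)
qed

lemma Re_trace_pd_chan_out:
  assumes "\<And>k. E k differentiable (at \<theta>)" and "cadj M = M"
  shows "Re (trace (pd (chan_out E (ketbra \<psi>)) \<theta> j ** M))
    = 2 * (\<Sum>l\<in>UNIV. (pd (E l) \<theta> j *v \<psi>) \<bullet> (M *v (E l \<theta> *v \<psi>)))"
proof -
  let ?K = "ketbra \<psi>"
  have "trace (E l \<theta> ** ?K ** cadj (pd (E l) \<theta> j) ** M)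
      = trace ((M ** E l \<theta>) ** ?K ** cadj (pd (E l) \<theta> j))" for l
    by (metis trace_mul_sym matrix_mul_assoc)
  moreover have "pd (E l) \<theta> j ** ?K ** cadj (E l \<theta>) ** M
      = pd (E l) \<theta> j ** ?K ** cadj (M ** E l \<theta>)" for l
    by (simp add: cadj_mult assms(2) matrix_mul_assoc)
  ultimately have "trace (pd (chan_out E ?K) \<theta> j ** M) = (\<Sum>l\<in>UNIV.
      trace ((M ** E l \<theta>) ** ?K ** cadj (pd (E l) \<theta> j))
      + trace (pd (E l) \<theta> j ** ?K ** cadj (M ** E l \<theta>)))"
    by (simp add: pd_chan_out[OF assms(1)] matrix_mult_sum_left matrix_add_rdistrib
        trace_sum trace_add)
  then show ?thesis
    by (simp only: Re_trace_ketbra plus_complex.sel(1) Re_sum sum.distrib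
        matrix_vector_mul_assoc[symmetric] inner_commute[of "M *v _"] mult_2)
qed

lemma Re_trace_SLD_chan_out:
  assumes "is_SLD (chan_out E (ketbra \<psi>)) \<theta> j lam" and "cadj M = M"
  shows "Re (trace (pd (chan_out E (ketbra \<psi>)) \<theta> j ** M))
    = (\<Sum>l\<in>UNIV. (lam *v (E l \<theta> *v \<psi>)) \<bullet> (M *v (E l \<theta> *v \<psi>)))"
proof -
  let ?\<rho> = "chan_out E (ketbra \<psi>) \<theta>"
  have lam: "cadj lam = lam"
    using assms(1) by (simp add: is_SLD_def)
  have "trace (pd (chan_out E (ketbra \<psi>)) \<theta> j ** M)
      = (1/2::real) *\<^sub>R (trace (M ** ?\<rho> ** cadj lam) + trace (lam ** ?\<rho> ** cadj M))"
    using assms(1)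
    by (simp add: is_SLD_def scalar_matrix_assoc[symmetric] matrix_add_rdistrib trace_add
        trace_scaleR lam assms(2) trace_mult_cycle[of ?\<rho>])
  then show ?thesis
    by (simp add: Re_trace_chan_out inner_commute[of "M *v _"])
qed

theorem lemma12:
  fixes E :: "'k::finite \<Rightarrow> real^'m \<Rightarrow> complex^'d^'d"
    and \<psi>0 :: "complex^'d"
    and \<theta> :: "real^'m"
    and lam :: "'m \<Rightarrow> complex^'d^'d"
  assumes diff: "\<And>k \<theta>'. E k differentiable (at \<theta>')"
    and kraus: "\<And>\<theta>'. (\<Sum>k\<in>UNIV. cadj (E k \<theta>') ** E k \<theta>') = mat 1"
    and norm: "norm \<psi>0 = 1"
    and sld: "\<And>j. is_SLD (chan_out E (ketbra \<psi>0)) \<theta> j (lam j)"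
  shows "loewner_le (SLD_info (chan_out E (ketbra \<psi>0) \<theta>) lam) (C_E E (ketbra \<psi>0) \<theta>)"
proof -
  define u where "u l = E l \<theta> *v \<psi>0" for l
  define y where "y l j = lam j *v u l" for l j
  define p where "p l j = pd (E l) \<theta> j *v \<psi>0" for l j
  have herm: "cadj (lam j) = lam j" for j
    using sld[of j] by (simp add: is_SLD_def)
  have "Re (trace (lam j ** chan_out E (ketbra \<psi>0) \<theta> ** lam k))
      = (\<Sum>l\<in>UNIV. y l j \<bullet> y l k)" for j k
    using Re_trace_chan_out[of "lam j" E \<psi>0 \<theta> "lam k"] by (simp add: herm y_def u_def)
  then have H: "SLD_info (chan_out E (ketbra \<psi>0) \<theta>) lam
      = (\<chi> j k. \<Sum>l\<in>UNIV. y l j \<bullet> y l k)"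
    by (simp add: SLD_info_def)
  have C: "C_E E (ketbra \<psi>0) \<theta> = 4 *\<^sub>R (\<chi> j k. \<Sum>l\<in>UNIV. p l j \<bullet> p l k)"
    by (simp add: C_E_def Re_trace_ketbra p_def vec_eq_iff)
  have "(\<Sum>l\<in>UNIV. y l j \<bullet> y l k)
      = Re (trace (pd (chan_out E (ketbra \<psi>0)) \<theta> j ** lam k))" for j k
    using Re_trace_SLD_chan_out[OF sld[of j] herm[of k]] by (simp add: y_def u_def)
  also have "\<dots> j k = 2 * (\<Sum>l\<in>UNIV. p l j \<bullet> y l k)" for j k
    using Re_trace_pd_chan_out[where E = E and M = "lam k", OF diff herm[of k]]
    by (simp add: y_def u_def p_def)
  finally have "(\<Sum>l\<in>UNIV. y l j \<bullet> y l k) = 2 * (\<Sum>l\<in>UNIV. p l j \<bullet> y l k)" for j k .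
  then have gram: "(\<chi> j k. \<Sum>l\<in>UNIV. y l j \<bullet> y l k)
      = 2 *\<^sub>R (\<chi> j k. \<Sum>l\<in>UNIV. p l j \<bullet> y l k)"
    by (simp add: vec_eq_iff)
  show ?thesis
    unfolding loewner_le_def
  proof
    fix v :: "real^'m"
    define w where "w l = (\<Sum>j\<in>UNIV. v$j *\<^sub>R y l j)" for l
    define a where "a l = (\<Sum>j\<in>UNIV. v$j *\<^sub>R p l j)" for l
    have "(\<Sum>l\<in>UNIV. w l \<bullet> w l) = 2 * (\<Sum>l\<in>UNIV. a l \<bullet> w l)"
      using arg_cong[OF gram, of "\<lambda>M. v \<bullet> (M *v v)"]
      by (simp add: scaleR_matrix_vector_assoc[symmetric] quadratic_form_sum_inner a_def w_def)
    then have "(\<Sum>l\<in>UNIV. w l \<bullet> w l) \<le> 4 * (\<Sum>l\<in>UNIV. a l \<bullet> a l)"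
      by (rule sum_inner_self_le_of_eq_twice)
    then show "v \<bullet> (SLD_info (chan_out E (ketbra \<psi>0) \<theta>) lam *v v)
        \<le> v \<bullet> (C_E E (ketbra \<psi>0) \<theta> *v v)"
      by (simp add: H C scaleR_matrix_vector_assoc[symmetric] quadratic_form_sum_inner a_def w_def)
  qed
qed

end
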